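(* Let $R=k\{x_1,\ldots,x_n;\,Q,\preceq\}$ be a PBW algebra and use TOP on both $R^s$ (built from $\preceq$) and $(R^{\rm env})^s$ (built from the chosen order on $\mathbb{N}^{2n}$), or POT on both. (a) If the order on $R^{\rm env}$ is $\preceq^*$ or $\preceq^c$ and $\mathbf h\in(R^{\rm env})^s$ satisfies $\exp(\mathbf h)=((\alpha,0),i)\in\mathbb{N}^{2n,(s)}$, then $\mathbf h\notin\mathrm{Ker}(\mathfrak m^s)$ and $\exp(\mathfrak m^s(\mathbf h))=(\alpha,i)$. (b) If the order on $R^{\rm env}$ is $\preceq_*$ or $\preceq_c$ and $\exp(\mathbf h)=((0,\alpha),i)$, then $\mathbf h\notin\mathrm{Ker}(\mathfrak m^s)$ and $\exp(\mathfrak m^s(\mathbf h))=(\alpha^{\rm op},i)$.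
   Context: $k$ is a field; $x^\alpha=x_1^{\alpha_1}\cdots x_n^{\alpha_n}$. A PBW algebra $R=k\{x_1,\ldots,x_n;Q,\preceq\}$ is a quotient of $k\langle x_1,\ldots,x_n\rangle$ by the two-sided ideal generated by $Q=\{x_jx_i-q_{ji}x_ix_j-p_{ji};\,i<j\}$, $q_{ji}\in k^*$, each $p_{ji}$ a combination of standard monomials with exponents $\prec\epsilon_i+\epsilon_j$ for an admissible order $\preceq$ (total, compatible with addition, $0$ minimal), such that the standard monomials form a $k$-basis. $R^{\rm env}=R\otimes_kR^{\rm op}$ is regarded as the PBW algebra in the variables $x_1\otimes1,\ldots,x_n\otimes1,1\otimes x_n,\ldots,1\otimes x_1$ (in this order); the exponent $(\alpha,\beta)\in\mathbb N^{2n}$ corresponds to the monomial $x^\alpha\otimes x^{\beta^{\rm op}}$, where $\beta^{\rm op}=(\beta_n,\ldots,\beta_1)$. Let $\alpha\preceq^{\rm op}\beta$ iff $\alpha^{\rm op}\preceq\beta^{\rm op}$. Orders on $\mathbb N^{2n}$: $(\alpha,\beta)\prec^*(\gamma,\delta)$ iff $\beta\prec^{\rm op}\delta$, or $\beta=\delta$ and $\alpha\prec\gamma$; $(\alpha,\beta)\prec_*(\gamma,\delta)$ iff $\alpha\prec\gamma$, or $\alpha=\gamma$ and $\beta\prec^{\rm op}\delta$; $(\alpha,\beta)\prec^c(\gamma,\delta)$ iff $\alpha+\beta^{\rm op}\prec\gamma+\delta^{\rm op}$, or equality and $\beta^{\rm op}\prec\delta^{\rm op}$; $(\alpha,\beta)\prec_c(\gamma,\delta)$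 iff $\alpha+\beta^{\rm op}\prec\gamma+\delta^{\rm op}$, or equality and $\alpha\prec\gamma$. For an admissible order $\le$ on $\mathbb N^m$, $\mathbb N^{m,(s)}=\mathbb N^m\times\{1,\ldots,s\}$ carries TOP: $(\alpha,i)<(\beta,j)$ iff $\alpha<\beta$, or $\alpha=\beta$ and $i>j$; and POT: $(\alpha,i)<(\beta,j)$ iff $i>j$, or $i=j$ and $\alpha<\beta$. A nonzero element of $A^s$ ($A=R$ or $R^{\rm env}$, basis $\mathbf e_i$) is uniquely $\sum c_{(\alpha,i)}x^\alpha\mathbf e_i$, and $\exp$ is the largest $(\alpha,i)$ with $c_{(\alpha,i)}\ne0$. $\mathfrak m^s:(R^{\rm env})^s\to R^s$ applies $\mathfrak m(r\otimes r')=rr'$ coordinatewise. *)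

theory Defs
  imports Complex_Main "HOL-Library.Function_Algebras"
begin

(* Exponents in N^n: functions nat => nat vanishing at indices >= n
   (index i stands for variable x_(i+1)). *)
definition expset :: "nat \<Rightarrow> (nat \<Rightarrow> nat) set" where
  "expset n = {\<alpha>. \<forall>i\<ge>n. \<alpha> i = 0}"

definition unitv :: "nat \<Rightarrow> nat \<Rightarrow> nat" where
  "unitv i = (\<lambda>j. if j = i then 1 else 0)"

definition opx :: "nat \<Rightarrow> (nat \<Rightarrow> nat) \<Rightarrow> (nat \<Rightarrow> nat)" where
  "opx n \<alpha> = (\<lambda>i. if i < n then \<alpha> (n - 1 - i) else 0)"

definition admissible :: "nat \<Rightarrow> ((nat \<Rightarrow> nat) \<Rightarrow> (nat \<Rightarrow> nat) \<Rightarrow> bool) \<Rightarrow> bool" where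
  "admissible n prec \<longleftrightarrow>
     (\<forall>a\<in>expset n. \<not> prec a a) \<and>
     (\<forall>a\<in>expset n. \<forall>b\<in>expset n. \<forall>c\<in>expset n. prec a b \<longrightarrow> prec b c \<longrightarrow> prec a c) \<and>
     (\<forall>a\<in>expset n. \<forall>b\<in>expset n. prec a b \<or> a = b \<or> prec b a) \<and>
     (\<forall>a\<in>expset n. \<forall>b\<in>expset n. \<forall>c\<in>expset n. prec a b \<longrightarrow> prec (a + c) (b + c)) \<and>
     (\<forall>a\<in>expset n. \<not> prec a 0)"

definition smono :: "nat \<Rightarrow> (nat \<Rightarrow> 'r::monoid_mult) \<Rightarrow> (nat \<Rightarrow> nat) \<Rightarrow> 'r" where
  "smono n x \<alpha> = prod_list (map (\<lambda>i. x i ^ \<alpha> i) [0..<n])"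

(* This characterizes R up to isomorphism as the quotient k<x>/<Q>. *)
definition pbw_algebra :: "('k::field \<Rightarrow> 'r::ring_1 \<Rightarrow> 'r) \<Rightarrow> nat \<Rightarrow> (nat \<Rightarrow> 'r)
     \<Rightarrow> ((nat \<Rightarrow> nat) \<Rightarrow> (nat \<Rightarrow> nat) \<Rightarrow> bool) \<Rightarrow> bool" where
  "pbw_algebra scale n x prec \<longleftrightarrow>
     vector_space scale \<and>
     (\<forall>c a b. scale c (a * b) = scale c a * b \<and> scale c (a * b) = a * scale c b) \<and>
     admissible n prec \<and>
     (\<forall>i j. i < j \<and> j < n \<longrightarrow>
        (\<exists>q p. q \<noteq> 0 \<and>
           p \<in> module.span scale (smono n x ` {\<gamma>\<in>expset n. prec \<gamma> (unitv i + unitv j)}) \<and>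
           x j * x i = scale q (x i * x j) + p)) \<and>
     inj_on (smono n x) (expset n) \<and>
     \<not> module.dependent scale (smono n x ` expset n) \<and>
     module.span scale (smono n x ` expset n) = UNIV"

definition coeffR :: "('k::field \<Rightarrow> 'r::ring_1 \<Rightarrow> 'r) \<Rightarrow> nat \<Rightarrow> (nat \<Rightarrow> 'r)
     \<Rightarrow> 'r \<Rightarrow> (nat \<Rightarrow> nat) \<Rightarrow> 'k" where
  "coeffR scale n x r \<alpha> = module.representation scale (smono n x ` expset n) r (smono n x \<alpha>)"

definition max_wrt :: "('a \<Rightarrow> 'a \<Rightarrow> bool) \<Rightarrow> 'a set \<Rightarrow> 'a" where
  "max_wrt lt S = (THE m. m \<in> S \<and> (\<forall>y\<in>S. y \<noteq> m \<longrightarrow> lt y m))"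

definition top_ord :: "('a \<Rightarrow> 'a \<Rightarrow> bool) \<Rightarrow> 'a \<times> nat \<Rightarrow> 'a \<times> nat \<Rightarrow> bool" where
  "top_ord lt p q \<longleftrightarrow> lt (fst p) (fst q) \<or> (fst p = fst q \<and> snd p > snd q)"

definition pot_ord :: "('a \<Rightarrow> 'a \<Rightarrow> bool) \<Rightarrow> 'a \<times> nat \<Rightarrow> 'a \<times> nat \<Rightarrow> bool" where
  "pot_ord lt p q \<longleftrightarrow> snd p > snd q \<or> (snd p = snd q \<and> lt (fst p) (fst q))"

definition mod_ord :: "bool \<Rightarrow> ('a \<Rightarrow> 'a \<Rightarrow> bool) \<Rightarrow> 'a \<times> nat \<Rightarrow> 'a \<times> nat \<Rightarrow> bool" where
  "mod_ord use_top lt = (if use_top then top_ord lt else pot_ord lt)"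

definition op_ord :: "nat \<Rightarrow> ((nat \<Rightarrow> nat) \<Rightarrow> (nat \<Rightarrow> nat) \<Rightarrow> bool) \<Rightarrow> (nat \<Rightarrow> nat) \<Rightarrow> (nat \<Rightarrow> nat) \<Rightarrow> bool" where
  "op_ord n prec a b \<longleftrightarrow> prec (opx n a) (opx n b)"

type_synonym exp2 = "(nat \<Rightarrow> nat) \<times> (nat \<Rightarrow> nat)"

definition ord_upper_star :: "nat \<Rightarrow> ((nat \<Rightarrow> nat) \<Rightarrow> (nat \<Rightarrow> nat) \<Rightarrow> bool) \<Rightarrow> exp2 \<Rightarrow> exp2 \<Rightarrow> bool" where
  "ord_upper_star n prec p q \<longleftrightarrow>
     op_ord n prec (snd p) (snd q) \<or> (snd p = snd q \<and> prec (fst p) (fst q))"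

definition ord_lower_star :: "nat \<Rightarrow> ((nat \<Rightarrow> nat) \<Rightarrow> (nat \<Rightarrow> nat) \<Rightarrow> bool) \<Rightarrow> exp2 \<Rightarrow> exp2 \<Rightarrow> bool" where
  "ord_lower_star n prec p q \<longleftrightarrow>
     prec (fst p) (fst q) \<or> (fst p = fst q \<and> op_ord n prec (snd p) (snd q))"

definition ord_upper_c :: "nat \<Rightarrow> ((nat \<Rightarrow> nat) \<Rightarrow> (nat \<Rightarrow> nat) \<Rightarrow> bool) \<Rightarrow> exp2 \<Rightarrow> exp2 \<Rightarrow> bool" where
  "ord_upper_c n prec p q \<longleftrightarrow>
     prec (fst p + opx n (snd p)) (fst q + opx n (snd q)) \<or>
     (fst p + opx n (snd p) = fst q + opx n (snd q) \<and> prec (opx n (snd p)) (opx n (snd q)))"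

definition ord_lower_c :: "nat \<Rightarrow> ((nat \<Rightarrow> nat) \<Rightarrow> (nat \<Rightarrow> nat) \<Rightarrow> bool) \<Rightarrow> exp2 \<Rightarrow> exp2 \<Rightarrow> bool" where
  "ord_lower_c n prec p q \<longleftrightarrow>
     prec (fst p + opx n (snd p)) (fst q + opx n (snd q)) \<or>
     (fst p + opx n (snd p) = fst q + opx n (snd q) \<and> prec (fst p) (fst q))"

(* Elements of (R^env)^s, R^env = R (x) R^op, written in the PBW basis of R^env:
   h((alpha,beta),i) is the coefficient of (x^alpha (x) x^(beta^op)) e_i. *)
definition env_vec :: "nat \<Rightarrow> nat \<Rightarrow> (exp2 \<times> nat \<Rightarrow> 'k::zero) \<Rightarrow> bool" where
  "env_vec n s h \<longleftrightarrow> finite {p. h p \<noteq> 0} \<and>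
     (\<forall>a b i. h ((a, b), i) \<noteq> 0 \<longrightarrow> a \<in> expset n \<and> b \<in> expset n \<and> i \<in> {1..s})"

definition exp_env :: "bool \<Rightarrow> (exp2 \<Rightarrow> exp2 \<Rightarrow> bool) \<Rightarrow> (exp2 \<times> nat \<Rightarrow> 'k::zero) \<Rightarrow> exp2 \<times> nat" where
  "exp_env use_top lt h = max_wrt (mod_ord use_top lt) {p. h p \<noteq> 0}"

definition mult_s :: "('k::field \<Rightarrow> 'r::ring_1 \<Rightarrow> 'r) \<Rightarrow> nat \<Rightarrow> (nat \<Rightarrow> 'r)
     \<Rightarrow> (exp2 \<times> nat \<Rightarrow> 'k) \<Rightarrow> nat \<Rightarrow> 'r" where
  "mult_s scale n x h i =
     (\<Sum>ab\<in>{ab. h (ab, i) \<noteq> 0}. scale (h (ab, i)) (smono n x (fst ab) * smono n x (opx n (snd ab))))"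

definition exp_R :: "bool \<Rightarrow> ('k::field \<Rightarrow> 'r::ring_1 \<Rightarrow> 'r) \<Rightarrow> nat \<Rightarrow> (nat \<Rightarrow> 'r)
     \<Rightarrow> ((nat \<Rightarrow> nat) \<Rightarrow> (nat \<Rightarrow> nat) \<Rightarrow> bool) \<Rightarrow> nat \<Rightarrow> (nat \<Rightarrow> 'r) \<Rightarrow> (nat \<Rightarrow> nat) \<times> nat" where
  "exp_R use_top scale n x prec s v = max_wrt (mod_ord use_top prec)
     {(\<alpha>, i). \<alpha> \<in> expset n \<and> i \<in> {1..s} \<and> coeffR scale n x (v i) \<alpha> \<noteq> 0}"

end

(* Multiplying out x^a (x) x^(b^op) gives x^a x^(b^op), and in a PBW algebra a product x^a x^c
   of standard monomials is a combination of standard monomials with exponents below a + c. This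
   is proved by well-founded induction on a + c (admissible orders are well-founded by Dickson's
   lemma): reordering x_i x_j for j < i by the defining relations only produces x_j x_i and terms
   of smaller exponent.
   Each of the four orders on N^(2n) is compatible with (a, b) |-> a + b^op below an exponent of
   the form (alpha, 0), resp. (0, alpha). The image of that leading term is the single standard
   monomial x^alpha, resp. x^(alpha^op), which therefore cannot cancel and is the leading term of
   the image m^s(h). *)

theory Submission
  imports Defs
begin

definition strict_total_on :: "'a set \<Rightarrow> ('a \<Rightarrow> 'a \<Rightarrow> bool) \<Rightarrow> bool" where
  "strict_total_on A lt \<longleftrightarrow> irreflp_on A lt \<and> transp_on A lt \<and> totalp_on A lt"

lemma strict_total_onD:
  assumes "strict_total_on A lt"
  shows strict_total_on_irrefl: "a \<in> A \<Longrightarrow> \<not> lt a a"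
    and strict_total_on_trans: "a \<in> A \<Longrightarrow> b \<in> A \<Longrightarrow> c \<in> A \<Longrightarrow> lt a b \<Longrightarrow> lt b c \<Longrightarrow> lt a c"
    and strict_total_on_total: "a \<in> A \<Longrightarrow> b \<in> A \<Longrightarrow> a \<noteq> b \<Longrightarrow> lt a b \<or> lt b a"
  using assms unfolding strict_total_on_def irreflp_on_def transp_on_def totalp_on_def by blast+

lemma strict_total_on_lex:
  assumes lt1: "strict_total_on A1 lt1" and lt2: "strict_total_on A2 lt2"
    and f: "f ` A \<subseteq> A1" and g: "g ` A \<subseteq> A2"
    and inj: "\<And>p q. p \<in> A \<Longrightarrow> q \<in> A \<Longrightarrow> f p = f q \<Longrightarrow> g p = g q \<Longrightarrow> p = q"
  shows "strict_total_on A (\<lambda>p q. lt1 (f p) (f q) \<or> (f p = f q \<and> lt2 (g p) (g q)))"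
  unfolding strict_total_on_def
proof (intro conjI irreflp_onI transp_onI totalp_onI)
  fix p assume "p \<in> A"
  then show "\<not> (lt1 (f p) (f p) \<or> f p = f p \<and> lt2 (g p) (g p))"
    using f g strict_total_on_irrefl[OF lt1] strict_total_on_irrefl[OF lt2] by blast
next
  fix p q r assume "p \<in> A" "q \<in> A" "r \<in> A"
  then have "f p \<in> A1" "f q \<in> A1" "f r \<in> A1" "g p \<in> A2" "g q \<in> A2" "g r \<in> A2"
    using f g by auto
  then show "lt1 (f p) (f q) \<or> f p = f q \<and> lt2 (g p) (g q) \<Longrightarrow>
      lt1 (f q) (f r) \<or> f q = f r \<and> lt2 (g q) (g r) \<Longrightarrow> lt1 (f p) (f r) \<or> f p = f r \<and> lt2 (g p) (g r)"
    using strict_total_on_trans[OF lt1] strict_total_on_trans[OF lt2] by metis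
next
  fix p q assume "p \<in> A" "q \<in> A" "p \<noteq> q"
  then show "(lt1 (f p) (f q) \<or> f p = f q \<and> lt2 (g p) (g q)) \<or>
      lt1 (f q) (f p) \<or> f q = f p \<and> lt2 (g q) (g p)"
    using f g inj strict_total_on_total[OF lt1, of "f p" "f q"]
      strict_total_on_total[OF lt2, of "g p" "g q"]
    by (metis image_subset_iff)
qed

lemma strict_total_on_inv_image:
  assumes "strict_total_on B lt" "f ` A \<subseteq> B" "inj_on f A"
  shows "strict_total_on A (\<lambda>p q. lt (f p) (f q))"
proof -
  have "(\<lambda>p q. lt (f p) (f q) \<or> (f p = f q \<and> lt (f p) (f q))) = (\<lambda>p q. lt (f p) (f q))"
    by auto
  then show ?thesis
    using strict_total_on_lex[OF assms(1,1,2,2)] assms(3) unfolding inj_on_def by metis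
qed

lemma strict_total_on_mod_ord:
  assumes "strict_total_on A lt"
  shows "strict_total_on (A \<times> UNIV) (mod_ord t lt)"
proof -
  have gt: "strict_total_on UNIV ((>) :: nat \<Rightarrow> nat \<Rightarrow> bool)"
    by (simp add: strict_total_on_def)
  have "strict_total_on (A \<times> UNIV) (top_ord lt)"
    using strict_total_on_lex[OF assms gt, of fst "A \<times> UNIV" snd]
    unfolding top_ord_def[abs_def] by (force simp: prod_eq_iff)
  moreover have "strict_total_on (A \<times> UNIV) (pot_ord lt)"
    using strict_total_on_lex[OF gt assms, of snd "A \<times> UNIV" fst]
    unfolding pot_ord_def[abs_def] by (force simp: prod_eq_iff)
  ultimately show ?thesis by (simp add: mod_ord_def)
qed

lemma mod_ord_same_index [simp]: "mod_ord t lt (a, i) (b, i) \<longleftrightarrow> lt a b"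
  by (simp add: mod_ord_def top_ord_def pot_ord_def)

lemma mod_ord_map:
  assumes "lt' q q0 \<Longrightarrow> lt (f q) (f q0)" and "mod_ord t lt' (q, j) (q0, i)"
  shows "mod_ord t lt (f q, j) (f q0, i)"
  using assms by (auto simp: mod_ord_def top_ord_def pot_ord_def split: if_splits)

lemma max_wrt_eqI:
  assumes lt: "strict_total_on A lt" and "S \<subseteq> A" "m \<in> S"
    and greatest: "\<And>y. y \<in> S \<Longrightarrow> y \<noteq> m \<Longrightarrow> lt y m"
  shows "max_wrt lt S = m"
  unfolding max_wrt_def
proof (rule the_equality)
  fix m' assume m': "m' \<in> S \<and> (\<forall>y\<in>S. y \<noteq> m' \<longrightarrow> lt y m')"
  show "m' = m"
  proof (rule ccontr)
    assume "m' \<noteq> m"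
    then have "lt m' m" "lt m m'" using greatest m' \<open>m \<in> S\<close> by auto
    then show False
      using strict_total_on_trans[OF lt] strict_total_on_irrefl[OF lt] m' assms(2,3) by blast
  qed
qed (use assms in blast)

lemma max_wrt_greatest:
  assumes lt: "strict_total_on A lt" and "finite S" "S \<noteq> {}" "S \<subseteq> A"
  shows "max_wrt lt S \<in> S \<and> (\<forall>y\<in>S. y \<noteq> max_wrt lt S \<longrightarrow> lt y (max_wrt lt S))"
proof -
  have "\<exists>m\<in>S. \<forall>y\<in>S. y \<noteq> m \<longrightarrow> lt y m"
    using assms(2,3,4)
  proof (induction S rule: finite_ne_induct)
    case (insert a S)
    then obtain m where m: "m \<in> S" "\<forall>y\<in>S. y \<noteq> m \<longrightarrow> lt y m" by auto
    have "a \<in> A" "m \<in> A" "a \<noteq> m" using insert m by auto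
    then consider "lt a m" | "lt m a" using strict_total_on_total[OF lt] by blast
    then show ?case
    proof cases
      case 1
      then show ?thesis using m by auto
    next
      case 2
      have "lt y a" if "y \<in> S" for y
        using that 2 m insert.prems strict_total_on_trans[OF lt, of y m a] by (cases "y = m") auto
      then have "\<forall>y\<in>insert a S. y \<noteq> a \<longrightarrow> lt y a" by blast
      then show ?thesis by blast
    qed
  qed simp
  then obtain m where "m \<in> S" "\<forall>y\<in>S. y \<noteq> m \<longrightarrow> lt y m" by blast
  moreover then have "max_wrt lt S = m" using max_wrt_eqI[OF assms(1,4)] by blast
  ultimately show ?thesis by simp
qed

section \<open>Admissible orders\<close>

lemma expset_add: "a \<in> expset n \<Longrightarrow> b \<in> expset n \<Longrightarrow> a + b \<in> expset n"
  by (simp add: expset_def)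

lemma zero_in_expset [simp]: "0 \<in> expset n"
  by (simp add: expset_def)

lemma unitv_in_expset: "i < n \<Longrightarrow> unitv i \<in> expset n"
  by (simp add: unitv_def expset_def)

lemma opx_in_expset: "opx n a \<in> expset n"
  by (simp add: expset_def opx_def)

lemma opx_opx: "a \<in> expset n \<Longrightarrow> opx n (opx n a) = a"
  by (auto simp: expset_def opx_def fun_eq_iff)

lemma inj_on_opx: "inj_on (opx n) (expset n)"
  by (metis inj_onI opx_opx)

lemma opx_zero [simp]: "opx n 0 = 0"
  by (simp add: opx_def fun_eq_iff)

lemma admissible_strict_total:
  assumes "admissible n prec"
  shows "strict_total_on (expset n) prec"
  unfolding strict_total_on_def
proof (intro conjI irreflp_onI transp_onI totalp_onI)
  show "\<And>a. a \<in> expset n \<Longrightarrow> \<not> prec a a"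
    using assms unfolding admissible_def by blast
  show "\<And>a b c. a \<in> expset n \<Longrightarrow> b \<in> expset n \<Longrightarrow> c \<in> expset n \<Longrightarrow> prec a b \<Longrightarrow> prec b c \<Longrightarrow> prec a c"
    using assms unfolding admissible_def by blast
  show "\<And>a b. a \<in> expset n \<Longrightarrow> b \<in> expset n \<Longrightarrow> a \<noteq> b \<Longrightarrow> prec a b \<or> prec b a"
    using assms unfolding admissible_def by blast
qed

lemma admissible_not_prec_zero: "admissible n prec \<Longrightarrow> a \<in> expset n \<Longrightarrow> \<not> prec a 0"
  unfolding admissible_def by blast

lemma admissible_add_left:
  assumes "admissible n prec" "a \<in> expset n" "b \<in> expset n" "c \<in> expset n" "prec a b"
  shows "prec (c + a) (c + b)"
proof -
  have "prec (a + c) (b + c)" using assms unfolding admissible_def by blast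
  then show ?thesis by (simp only: add.commute)
qed

lemma admissible_zero_prec:
  assumes "admissible n prec" "a \<in> expset n" "a \<noteq> 0"
  shows "prec 0 a"
  using strict_total_on_total[OF admissible_strict_total[OF assms(1)] zero_in_expset assms(2)]
    admissible_not_prec_zero[OF assms(1,2)] assms(3) by blast

lemma admissible_le_imp_preceq:
  assumes adm: "admissible n prec" and a: "a \<in> expset n" and b: "b \<in> expset n" and "a \<le> b"
  shows "a = b \<or> prec a b"
proof -
  have pointwise: "a i \<le> b i" for i using \<open>a \<le> b\<close> by (simp add: le_fun_def)
  have d: "b - a \<in> expset n" using b by (simp add: expset_def)
  have b_eq: "a + (b - a) = b" by (rule ext) (simp add: pointwise)
  show ?thesis
  proof (cases "b - a = 0")
    case True
    then show ?thesis using b_eq by simp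
  next
    case False
    have "prec 0 (b - a)" using admissible_zero_prec[OF adm d False] .
    then have "prec (a + 0) (a + (b - a))"
      by (rule admissible_add_left[OF adm zero_in_expset d a])
    then show ?thesis using b_eq by simp
  qed
qed

lemma nat_seq_incseq_subseq:
  fixes f :: "nat \<Rightarrow> nat"
  obtains r where "strict_mono r" "incseq (\<lambda>k. f (r k))"
proof -
  obtain r where r: "strict_mono r" "monoseq (\<lambda>k. f (r k))" using seq_monosub by blast
  show ?thesis
  proof (cases "incseq (\<lambda>k. f (r k))")
    case True
    then show ?thesis using r that by blast
  next
    case False
    then have dec: "decseq (\<lambda>k. f (r k))" using r(2) monoseq_iff by blast
    obtain k0 where k0: "\<And>k. f (r k0) \<le> f (r k)"
      using ex_has_least_nat[of "\<lambda>_. True" 0 "\<lambda>k. f (r k)"] by blast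
    have "f (r (k + k0)) = f (r k0)" for k
      using decseqD[OF dec, of k0 "k + k0"] k0[of "k + k0"] by simp
    then have "incseq (\<lambda>k. f (r (k + k0)))" by (simp add: incseq_def)
    moreover have "strict_mono (\<lambda>k. r (k + k0))" using r(1) by (simp add: strict_mono_def)
    ultimately show ?thesis using that by blast
  qed
qed

lemma dickson_subseq:
  fixes f :: "nat \<Rightarrow> nat \<Rightarrow> nat"
  shows "\<exists>r. strict_mono r \<and> (\<forall>j<N. incseq (\<lambda>k. f (r k) j))"
proof (induction N)
  case 0
  have "strict_mono (id :: nat \<Rightarrow> nat)" by (simp add: strict_mono_def)
  then show ?case by blast
next
  case (Suc N)
  then obtain r where r: "strict_mono r" "\<forall>j<N. incseq (\<lambda>k. f (r k) j)" by blast
  obtain r' where r': "strict_mono r'" "incseq (\<lambda>k. f (r (r' k)) N)"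
    by (rule nat_seq_incseq_subseq)
  have "incseq (\<lambda>k. f (r (r' k)) j)" if "j < N" for j
    using r(2) that strict_mono_less_eq[OF r'(1)] by (simp add: incseq_def)
  then have "\<forall>j<Suc N. incseq (\<lambda>k. f ((r \<circ> r') k) j)"
    using r' by (auto simp: less_Suc_eq)
  moreover have "strict_mono (r \<circ> r')" using r(1) r'(1) by (rule strict_mono_o)
  ultimately show ?case by blast
qed

lemma admissible_wf:
  assumes adm: "admissible n prec"
  shows "wf {(a, b). a \<in> expset n \<and> b \<in> expset n \<and> prec a b}"
  unfolding wf_iff_no_infinite_down_chain
proof (rule notI, elim exE)
  fix f assume chain: "\<forall>i. (f (Suc i), f i) \<in> {(a, b). a \<in> expset n \<and> b \<in> expset n \<and> prec a b}"
  have f: "f i \<in> expset n" for i using chain by blast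
  have descending: "prec (f j) (f i)" if "i < j" for i j
    using that
  proof (induction j)
    case (Suc j)
    then show ?case
      using chain f strict_total_on_trans[OF admissible_strict_total[OF adm]]
      by (metis (no_types, lifting) case_prodD less_Suc_eq mem_Collect_eq)
  qed simp
  obtain r where r: "strict_mono r" "\<forall>j<n. incseq (\<lambda>k. f (r k) j)"
    using dickson_subseq by blast
  have "f (r 0) \<le> f (r 1)"
  proof (rule le_funI)
    fix j show "f (r 0) j \<le> f (r 1) j"
      using r(2) f[of "r 0"] by (cases "j < n") (auto simp: expset_def incseq_def)
  qed
  then have "f (r 0) = f (r 1) \<or> prec (f (r 0)) (f (r 1))"
    using admissible_le_imp_preceq[OF adm f f] by blast
  moreover have "prec (f (r 1)) (f (r 0))" using descending r(1) by (simp add: strict_mono_def)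
  ultimately show False
    using f strict_total_on_trans[OF admissible_strict_total[OF adm]]
      strict_total_on_irrefl[OF admissible_strict_total[OF adm]] by metis
qed

section \<open>The orders on exponents of the enveloping algebra\<close>

lemma strict_total_on_op_ord:
  assumes "admissible n prec"
  shows "strict_total_on (expset n) (op_ord n prec)"
  unfolding op_ord_def[abs_def]
  by (rule strict_total_on_inv_image[OF admissible_strict_total[OF assms], where f = "opx n"])
    (auto simp: opx_in_expset inj_on_opx)

lemma strict_total_on_ord_upper_star:
  assumes adm: "admissible n prec"
  shows "strict_total_on (expset n \<times> expset n) (ord_upper_star n prec)"
  unfolding ord_upper_star_def[abs_def]
  by (rule strict_total_on_lex[OF strict_total_on_op_ord[OF adm] admissible_strict_total[OF adm],
        where f = snd and g = fst])
    (auto simp: prod_eq_iff)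

lemma strict_total_on_ord_lower_star:
  assumes adm: "admissible n prec"
  shows "strict_total_on (expset n \<times> expset n) (ord_lower_star n prec)"
  unfolding ord_lower_star_def[abs_def]
  by (rule strict_total_on_lex[OF admissible_strict_total[OF adm] strict_total_on_op_ord[OF adm],
        where f = fst and g = snd])
    (auto simp: prod_eq_iff)

(* m(x^a (x) x^(b^op)) = x^a x^(b^op) is a combination of standard monomials with exponents
   below mult_exp n (a, b) = a + b^op. *)
definition mult_exp :: "nat \<Rightarrow> exp2 \<Rightarrow> nat \<Rightarrow> nat" where
  "mult_exp n p = fst p + opx n (snd p)"

lemma mult_exp_in_expset: "p \<in> expset n \<times> expset n \<Longrightarrow> mult_exp n p \<in> expset n"
  by (auto simp: mult_exp_def intro: expset_add opx_in_expset)

lemma mult_exp_fst [simp]: "mult_exp n (\<alpha>, 0) = \<alpha>"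
  by (simp add: mult_exp_def)

lemma mult_exp_snd [simp]: "mult_exp n (0, \<alpha>) = opx n \<alpha>"
  by (simp add: mult_exp_def)

lemma strict_total_on_ord_upper_c:
  assumes adm: "admissible n prec"
  shows "strict_total_on (expset n \<times> expset n) (ord_upper_c n prec)"
  unfolding ord_upper_c_def[abs_def] mult_exp_def[symmetric]
proof (rule strict_total_on_lex[OF admissible_strict_total[OF adm] admissible_strict_total[OF adm],
      where f = "mult_exp n" and g = "\<lambda>p. opx n (snd p)"])
  show "(\<lambda>p. opx n (snd p)) ` (expset n \<times> expset n) \<subseteq> expset n"
    by (auto simp: opx_in_expset)
  show "p = q" if "p \<in> expset n \<times> expset n" "q \<in> expset n \<times> expset n"
    "mult_exp n p = mult_exp n q" "opx n (snd p) = opx n (snd q)" for p q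
  proof -
    have "snd p = snd q" using that inj_on_opx[of n] by (auto dest: inj_onD)
    moreover then have "fst p = fst q" using that(3) by (simp add: mult_exp_def)
    ultimately show ?thesis by (simp add: prod_eq_iff)
  qed
qed (auto simp: mult_exp_in_expset)

lemma strict_total_on_ord_lower_c:
  assumes adm: "admissible n prec"
  shows "strict_total_on (expset n \<times> expset n) (ord_lower_c n prec)"
  unfolding ord_lower_c_def[abs_def] mult_exp_def[symmetric]
  by (rule strict_total_on_lex[OF admissible_strict_total[OF adm] admissible_strict_total[OF adm],
        where f = "mult_exp n" and g = fst])
    (auto simp: mult_exp_def prod_eq_iff intro: expset_add opx_in_expset
      dest: inj_onD[OF inj_on_opx])

lemma ord_upper_star_mult_exp:
  assumes adm: "admissible n prec" and "p \<in> expset n \<times> expset n" "ord_upper_star n prec p (\<alpha>, 0)"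
  shows "prec (mult_exp n p) (mult_exp n (\<alpha>, 0))"
  using assms admissible_not_prec_zero[OF adm opx_in_expset[of n "snd p"]]
  by (auto simp: ord_upper_star_def op_ord_def mult_exp_def)

lemma ord_upper_c_mult_exp:
  assumes adm: "admissible n prec" and "p \<in> expset n \<times> expset n" "ord_upper_c n prec p (\<alpha>, 0)"
  shows "prec (mult_exp n p) (mult_exp n (\<alpha>, 0))"
  using assms admissible_not_prec_zero[OF adm opx_in_expset[of n "snd p"]]
  by (auto simp: ord_upper_c_def mult_exp_def)

lemma ord_lower_star_mult_exp:
  assumes adm: "admissible n prec" and "p \<in> expset n \<times> expset n" "ord_lower_star n prec p (0, \<alpha>)"
  shows "prec (mult_exp n p) (mult_exp n (0, \<alpha>))"
  using assms admissible_not_prec_zero[OF adm, of "fst p"]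
  by (auto simp: ord_lower_star_def op_ord_def mult_exp_def)

lemma ord_lower_c_mult_exp:
  assumes adm: "admissible n prec" and "p \<in> expset n \<times> expset n" "ord_lower_c n prec p (0, \<alpha>)"
  shows "prec (mult_exp n p) (mult_exp n (0, \<alpha>))"
  using assms admissible_not_prec_zero[OF adm, of "fst p"]
  by (auto simp: ord_lower_c_def mult_exp_def)

lemma smono_zero [simp]: "smono n x 0 = 1"
  by (simp add: smono_def map_replicate_const)

lemma smono_unitv_mult:
  assumes "i < n" "\<forall>k<i. \<beta> k = 0"
  shows "x i * smono n x \<beta> = smono n x (unitv i + \<beta>)"
proof -
  have split: "[0..<n] = [0..<i] @ i # [Suc i..<n]"
    using assms(1) upt_add_eq_append[of 0 i "n - i"] upt_conv_Cons[of i n] by simp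
  have ones: "prod_list (map f [0..<i]) = 1" if "\<And>k. k < i \<Longrightarrow> f k = 1" for f :: "nat \<Rightarrow> 'a"
  proof -
    have "map f [0..<i] = map (\<lambda>_. 1) [0..<i]" using that by simp
    then show ?thesis by (simp add: map_replicate_const)
  qed
  have below: "prod_list (map (\<lambda>k. x k ^ \<beta> k) [0..<i]) = 1"
    "prod_list (map (\<lambda>k. x k ^ (unitv i + \<beta>) k) [0..<i]) = 1"
    using assms(2) by (auto intro!: ones simp: unitv_def)
  have above: "map (\<lambda>k. x k ^ (unitv i + \<beta>) k) [Suc i..<n] = map (\<lambda>k. x k ^ \<beta> k) [Suc i..<n]"
    by (rule map_cong) (auto simp: unitv_def)
  have at: "x i ^ (unitv i + \<beta>) i = x i * x i ^ \<beta> i"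
    by (simp add: unitv_def)
  show ?thesis
    unfolding smono_def split map_append prod_list.append list.map prod_list.Cons below above at
    by (simp add: mult.assoc)
qed

lemma smono_unitv: "k < n \<Longrightarrow> smono n x (unitv k) = x k"
  using smono_unitv_mult[of k n 0 x] by simp

lemma expset_split_least:
  assumes "\<beta> \<in> expset n" "\<beta> k \<noteq> 0"
  obtains j \<beta>' where "j \<le> k" "j < n" "\<beta>' \<in> expset n" "\<beta> = unitv j + \<beta>'" "\<forall>l<j. \<beta>' l = 0"
proof
  define j where "j = (LEAST j. \<beta> j \<noteq> 0)"
  show "j \<le> k" unfolding j_def using assms(2) by (rule Least_le)
  have "\<beta> j \<noteq> 0" unfolding j_def using assms(2) by (rule LeastI)
  then show "j < n" using assms(1) by (auto simp: expset_def not_less[symmetric])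
  show "\<beta> - unitv j \<in> expset n" using assms(1) by (simp add: expset_def)
  show "\<beta> = unitv j + (\<beta> - unitv j)"
    using \<open>\<beta> j \<noteq> 0\<close> by (auto simp: unitv_def fun_eq_iff)
  show "\<forall>l<j. (\<beta> - unitv j) l = 0"
    unfolding j_def using not_less_Least by (fastforce simp: unitv_def)
qed

lemma env_vec_support:
  "env_vec n s h \<Longrightarrow> h (p, j) \<noteq> 0 \<Longrightarrow> p \<in> expset n \<times> expset n \<and> j \<in> {1..s}"
  unfolding env_vec_def by (cases p) blast

lemma env_vec_finite_row:
  assumes "env_vec n s h"
  shows "finite {p. h (p, j) \<noteq> 0}"
proof -
  have "finite ((\<lambda>p. (p, j)) -` {q. h q \<noteq> 0})"
    using assms unfolding env_vec_def by (intro finite_vimageI) (auto simp: inj_on_def)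
  then show ?thesis by (simp add: vimage_def)
qed

lemma exp_env_greatest:
  assumes h: "env_vec n s h" "h \<noteq> (\<lambda>_. 0)" and ord: "strict_total_on (expset n \<times> expset n) ord"
  shows "h (exp_env t ord h) \<noteq> 0"
    and "\<And>p. h p \<noteq> 0 \<Longrightarrow> p \<noteq> exp_env t ord h \<Longrightarrow> mod_ord t ord p (exp_env t ord h)"
proof -
  have "{p. h p \<noteq> 0} \<subseteq> (expset n \<times> expset n) \<times> UNIV"
    using env_vec_support[OF h(1)] by auto
  moreover have "finite {p. h p \<noteq> 0}" "{p. h p \<noteq> 0} \<noteq> {}"
    using h unfolding env_vec_def by auto
  ultimately have "exp_env t ord h \<in> {p. h p \<noteq> 0} \<and>
      (\<forall>p\<in>{p. h p \<noteq> 0}. p \<noteq> exp_env t ord h \<longrightarrow> mod_ord t ord p (exp_env t ord h))"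
    unfolding exp_env_def by (intro max_wrt_greatest[OF strict_total_on_mod_ord[OF ord]])
  then show "h (exp_env t ord h) \<noteq> 0"
    and "\<And>p. h p \<noteq> 0 \<Longrightarrow> p \<noteq> exp_env t ord h \<Longrightarrow> mod_ord t ord p (exp_env t ord h)"
    by auto
qed

definition mult_mono :: "nat \<Rightarrow> (nat \<Rightarrow> 'r::monoid_mult) \<Rightarrow> exp2 \<Rightarrow> 'r" where
  "mult_mono n x p = smono n x (fst p) * smono n x (opx n (snd p))"

lemma mult_s_eq:
  "mult_s scale n x h j = (\<Sum>p\<in>{p. h (p, j) \<noteq> 0}. scale (h (p, j)) (mult_mono n x p))"
  by (simp add: mult_s_def mult_mono_def)

lemma mult_mono_pure: "fst p = 0 \<or> snd p = 0 \<Longrightarrow> mult_mono n x p = smono n x (mult_exp n p)"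
  by (auto simp: mult_mono_def mult_exp_def)

section \<open>Products of standard monomials in a PBW algebra\<close>

locale pbw =
  fixes scale :: "'k::field \<Rightarrow> 'r::ring_1 \<Rightarrow> 'r" and n :: nat and x :: "nat \<Rightarrow> 'r"
    and prec :: "(nat \<Rightarrow> nat) \<Rightarrow> (nat \<Rightarrow> nat) \<Rightarrow> bool"
  assumes pbw_algebra: "pbw_algebra scale n x prec"
begin

sublocale vs: vector_space scale
  using pbw_algebra by (simp add: pbw_algebra_def)

lemma admissible: "admissible n prec"
  using pbw_algebra by (simp add: pbw_algebra_def)

lemma scale_mult_left: "scale c (a * b) = scale c a * b"
  using pbw_algebra unfolding pbw_algebra_def by blast

lemma scale_mult_right: "scale c (a * b) = a * scale c b"
  using pbw_algebra unfolding pbw_algebra_def by blast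

lemma commutation:
  "i < j \<Longrightarrow> j < n \<Longrightarrow> \<exists>q p. p \<in> vs.span (smono n x ` {\<gamma> \<in> expset n. prec \<gamma> (unitv i + unitv j)})
     \<and> x j * x i = scale q (x i * x j) + p"
  using pbw_algebra unfolding pbw_algebra_def by blast

lemma inj_on_smono: "inj_on (smono n x) (expset n)"
  using pbw_algebra by (simp add: pbw_algebra_def)

lemma independent_smono: "vs.independent (smono n x ` expset n)"
  using pbw_algebra by (simp add: pbw_algebra_def)

lemma span_smono: "vs.span (smono n x ` expset n) = UNIV"
  using pbw_algebra by (simp add: pbw_algebra_def)

lemma prec_trans: "a \<in> expset n \<Longrightarrow> b \<in> expset n \<Longrightarrow> c \<in> expset n \<Longrightarrow> prec a b \<Longrightarrow> prec b c \<Longrightarrow> prec a c"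
  using strict_total_on_trans[OF admissible_strict_total[OF admissible]] .

lemma prec_add_left: "a \<in> expset n \<Longrightarrow> b \<in> expset n \<Longrightarrow> c \<in> expset n \<Longrightarrow> prec a b \<Longrightarrow> prec (c + a) (c + b)"
  using admissible_add_left[OF admissible] .

lemma span_mult_left:
  assumes "r \<in> vs.span S" "\<And>s. s \<in> S \<Longrightarrow> y * s \<in> vs.span T"
  shows "y * r \<in> vs.span T"
  using assms(1)
proof (induction rule: vs.span_induct_alt)
  case (step c s r)
  then show ?case
    using assms(2) by (simp add: distrib_left scale_mult_right[symmetric] vs.span_add vs.span_scale)
qed (simp add: vs.span_zero)

lemma span_mult_right:
  assumes "r \<in> vs.span S" "\<And>s. s \<in> S \<Longrightarrow> s * y \<in> vs.span T"
  shows "r * y \<in> vs.span T"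
  using assms(1)
proof (induction rule: vs.span_induct_alt)
  case (step c s r)
  then show ?case
    using assms(2) by (simp add: distrib_right scale_mult_left[symmetric] vs.span_add vs.span_scale)
qed (simp add: vs.span_zero)

definition filtration :: "(nat \<Rightarrow> nat) \<Rightarrow> 'r set" where
  "filtration \<gamma> = vs.span (smono n x ` {\<delta> \<in> expset n. \<delta> = \<gamma> \<or> prec \<delta> \<gamma>})"

lemma smono_in_filtration: "\<delta> \<in> expset n \<Longrightarrow> smono n x \<delta> \<in> filtration \<delta>"
  unfolding filtration_def by (rule vs.span_base) auto

lemma filtration_mono:
  "\<delta> \<in> expset n \<Longrightarrow> \<gamma> \<in> expset n \<Longrightarrow> prec \<delta> \<gamma> \<Longrightarrow> filtration \<delta> \<subseteq> filtration \<gamma>"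
  unfolding filtration_def by (rule vs.span_mono) (auto intro: prec_trans)

lemma filtration_add: "a \<in> filtration \<gamma> \<Longrightarrow> b \<in> filtration \<gamma> \<Longrightarrow> a + b \<in> filtration \<gamma>"
  unfolding filtration_def by (rule vs.span_add)

lemma filtration_scale: "a \<in> filtration \<gamma> \<Longrightarrow> scale c a \<in> filtration \<gamma>"
  unfolding filtration_def by (rule vs.span_scale)

lemma mult_left_filtration:
  assumes "r \<in> filtration \<theta>"
    and "\<And>\<delta>. \<delta> \<in> expset n \<Longrightarrow> \<delta> = \<theta> \<or> prec \<delta> \<theta> \<Longrightarrow> y * smono n x \<delta> \<in> filtration \<Gamma>"
  shows "y * r \<in> filtration \<Gamma>"
  using span_mult_left[of r _ y] assms unfolding filtration_def by blast

lemma prec_add_unitv: "j < n \<Longrightarrow> \<theta> \<in> expset n \<Longrightarrow> prec \<theta> (unitv j + \<theta>)"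
  using prec_add_left[OF zero_in_expset unitv_in_expset _
      admissible_zero_prec[OF admissible unitv_in_expset]]
  by (simp add: add.commute unitv_def fun_eq_iff)

lemma commutation_smono:
  assumes "j < i" "i < n" "\<forall>l<j. \<beta> l = 0"
  obtains q p where "p \<in> vs.span (smono n x ` {\<gamma> \<in> expset n. prec \<gamma> (unitv j + unitv i)})"
    and "x i * smono n x (unitv j + \<beta>) = scale q (x j * (x i * smono n x \<beta>)) + p * smono n x \<beta>"
proof -
  obtain q p where p: "p \<in> vs.span (smono n x ` {\<gamma> \<in> expset n. prec \<gamma> (unitv j + unitv i)})"
    and commute: "x i * x j = scale q (x j * x i) + p"
    using commutation[OF assms(1,2)] by blast
  have "x i * smono n x (unitv j + \<beta>) = (x i * x j) * smono n x \<beta>"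
    using smono_unitv_mult[of j n \<beta> x] assms by (simp add: mult.assoc)
  also have "\<dots> = scale q (x j * (x i * smono n x \<beta>)) + p * smono n x \<beta>"
    by (simp add: commute distrib_right scale_mult_left[symmetric] mult.assoc)
  finally show thesis using that p by blast
qed

(* The induction step of smono_mult_smono_in_filtration: the claim is known for all exponent
   sums below \<Gamma>. *)
context
  fixes \<Gamma> :: "nat \<Rightarrow> nat"
  assumes \<Gamma>: "\<Gamma> \<in> expset n"
    and products_below: "\<And>a c. a \<in> expset n \<Longrightarrow> c \<in> expset n \<Longrightarrow> prec (a + c) \<Gamma>
      \<Longrightarrow> smono n x a * smono n x c \<in> filtration (a + c)"
begin

lemma smono_mult_below:
  assumes "a \<in> expset n" "c \<in> expset n" "prec (a + c) \<Gamma>"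
  shows "smono n x a * smono n x c \<in> filtration \<Gamma>"
  using products_below[OF assms] filtration_mono[OF expset_add[OF assms(1,2)] \<Gamma> assms(3)] by blast

lemma generator_mult_filtration:
  assumes k: "k < n" and \<theta>: "\<theta> \<in> expset n" and \<Gamma>_eq: "unitv k + \<theta> = \<Gamma>"
    and top: "x k * smono n x \<theta> \<in> filtration \<Gamma>" and r: "r \<in> filtration \<theta>"
  shows "x k * r \<in> filtration \<Gamma>"
proof (rule mult_left_filtration[OF r])
  fix \<delta> assume \<delta>: "\<delta> \<in> expset n" "\<delta> = \<theta> \<or> prec \<delta> \<theta>"
  show "x k * smono n x \<delta> \<in> filtration \<Gamma>"
  proof (cases "\<delta> = \<theta>")
    case False
    then have "prec (unitv k + \<delta>) \<Gamma>"
      using \<delta> prec_add_left[OF \<delta>(1) \<theta> unitv_in_expset[OF k]] \<Gamma>_eq by auto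
    then show ?thesis
      using smono_mult_below[OF unitv_in_expset[OF k] \<delta>(1)] smono_unitv[OF k, where x = x] by simp
  qed (use top in simp)
qed

lemma span_below_mult_smono:
  assumes p: "p \<in> vs.span (smono n x ` {\<gamma> \<in> expset n. prec \<gamma> \<epsilon>})"
    and \<epsilon>: "\<epsilon> \<in> expset n" and \<beta>: "\<beta> \<in> expset n" and \<Gamma>_eq: "\<beta> + \<epsilon> = \<Gamma>"
  shows "p * smono n x \<beta> \<in> filtration \<Gamma>"
  unfolding filtration_def
proof (rule span_mult_right[OF p])
  fix s assume "s \<in> smono n x ` {\<gamma> \<in> expset n. prec \<gamma> \<epsilon>}"
  then obtain \<gamma> where \<gamma>: "\<gamma> \<in> expset n" "prec \<gamma> \<epsilon>" and s: "s = smono n x \<gamma>" by blast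
  have "prec (\<gamma> + \<beta>) \<Gamma>"
    using prec_add_left[OF \<gamma>(1) \<epsilon> \<beta> \<gamma>(2)] \<Gamma>_eq by (simp add: add.commute)
  then show "s * smono n x \<beta> \<in> vs.span (smono n x ` {\<delta> \<in> expset n. \<delta> = \<Gamma> \<or> prec \<delta> \<Gamma>})"
    using smono_mult_below[OF \<gamma>(1) \<beta>] s unfolding filtration_def by blast
qed

(* If \<beta> involves some x_j with j < i, the PBW relation for x_i x_j leaves x_j (x_i x^\<beta>')
   of exponent \<Gamma>, where x_i x^\<beta>' lies below \<Gamma>, plus terms of smaller exponent. *)
lemma generator_mult_smono_at:
  assumes i: "i < n" and \<beta>: "\<beta> \<in> expset n" and \<Gamma>_eq: "unitv i + \<beta> = \<Gamma>"
  shows "x i * smono n x \<beta> \<in> filtration \<Gamma>"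
proof (cases "\<forall>k<i. \<beta> k = 0")
  case True
  then show ?thesis using smono_unitv_mult[OF i, where x = x] smono_in_filtration[OF \<Gamma>] \<Gamma>_eq by simp
next
  case False
  then obtain k where "k < i" "\<beta> k \<noteq> 0" by auto
  then obtain j \<beta>' where j: "j < i" "j < n"
    and \<beta>': "\<beta>' \<in> expset n" "\<beta> = unitv j + \<beta>'" "\<forall>l<j. \<beta>' l = 0"
    using expset_split_least[OF \<beta>] by (metis order.strict_trans1)
  obtain q p where p: "p \<in> vs.span (smono n x ` {\<gamma> \<in> expset n. prec \<gamma> (unitv j + unitv i)})"
    and expand: "x i * smono n x \<beta> = scale q (x j * (x i * smono n x \<beta>')) + p * smono n x \<beta>'"
    using commutation_smono[OF j(1) i \<beta>'(3), unfolded \<beta>'(2)[symmetric]] by blast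
  have \<theta>: "unitv i + \<beta>' \<in> expset n" using i \<beta>' by (simp add: expset_add unitv_in_expset)
  have \<Gamma>_split: "unitv j + (unitv i + \<beta>') = \<Gamma>" using \<Gamma>_eq \<beta>'(2) by (simp add: ac_simps)
  have "x j * (x i * smono n x \<beta>') \<in> filtration \<Gamma>"
  proof (rule generator_mult_filtration[OF j(2) \<theta> \<Gamma>_split])
    have "\<forall>l<j. (unitv i + \<beta>') l = 0" using j(1) \<beta>'(3) by (simp add: unitv_def)
    then show "x j * smono n x (unitv i + \<beta>') \<in> filtration \<Gamma>"
      using smono_unitv_mult[OF j(2), where x = x] smono_in_filtration[OF \<Gamma>] \<Gamma>_split by simp
    show "x i * smono n x \<beta>' \<in> filtration (unitv i + \<beta>')"
      using products_below[OF unitv_in_expset[OF i] \<beta>'(1)] prec_add_unitv[OF j(2) \<theta>] \<Gamma>_split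
        smono_unitv[OF i, where x = x] by simp
  qed
  moreover have "p * smono n x \<beta>' \<in> filtration \<Gamma>"
    using span_below_mult_smono[OF p _ \<beta>'(1)] \<Gamma>_split i j(2)
    by (simp add: ac_simps expset_add unitv_in_expset)
  ultimately show ?thesis unfolding expand by (simp add: filtration_add filtration_scale)
qed

lemma smono_mult_smono_at:
  assumes a: "a \<in> expset n" and c: "c \<in> expset n" and \<Gamma>_eq: "a + c = \<Gamma>"
  shows "smono n x a * smono n x c \<in> filtration \<Gamma>"
proof (cases "a = 0")
  case True
  then show ?thesis using smono_in_filtration[OF c] \<Gamma>_eq by simp
next
  case False
  then obtain k where "a k \<noteq> 0" by (auto simp: fun_eq_iff)
  then obtain j a' where j: "j < n" and a': "a' \<in> expset n" "a = unitv j + a'" "\<forall>l<j. a' l = 0"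
    using expset_split_least[OF a] by metis
  have a'c: "a' + c \<in> expset n" using a'(1) c by (rule expset_add)
  have \<Gamma>_split: "unitv j + (a' + c) = \<Gamma>" using \<Gamma>_eq a'(2) by (simp add: ac_simps)
  have "smono n x a * smono n x c = x j * (smono n x a' * smono n x c)"
    using smono_unitv_mult[OF j a'(3), where x = x, symmetric] a'(2) by (simp add: mult.assoc)
  moreover have "x j * (smono n x a' * smono n x c) \<in> filtration \<Gamma>"
  proof (rule generator_mult_filtration[OF j a'c \<Gamma>_split])
    show "x j * smono n x (a' + c) \<in> filtration \<Gamma>"
      using generator_mult_smono_at[OF j a'c \<Gamma>_split] .
    show "smono n x a' * smono n x c \<in> filtration (a' + c)"
      using products_below[OF a'(1) c] prec_add_unitv[OF j a'c] \<Gamma>_split by simp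
  qed
  ultimately show ?thesis by simp
qed

end

lemma smono_mult_smono_in_filtration:
  assumes "a \<in> expset n" "c \<in> expset n"
  shows "smono n x a * smono n x c \<in> filtration (a + c)"
proof -
  have "\<forall>a\<in>expset n. \<forall>c\<in>expset n. a + c = \<Gamma> \<longrightarrow> smono n x a * smono n x c \<in> filtration \<Gamma>" for \<Gamma>
  proof (induction \<Gamma> rule: wf_induct[OF admissible_wf[OF admissible]])
    case (1 \<Gamma>)
    show ?case
    proof (intro ballI impI)
      fix a c assume a: "a \<in> expset n" and c: "c \<in> expset n" and \<Gamma>_eq: "a + c = \<Gamma>"
      have \<Gamma>: "\<Gamma> \<in> expset n" using expset_add[OF a c] \<Gamma>_eq by simp
      show "smono n x a * smono n x c \<in> filtration \<Gamma>"
        by (rule smono_mult_smono_at[OF \<Gamma> _ a c \<Gamma>_eq]) (use 1 \<Gamma> expset_add in blast)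
    qed
  qed
  then show ?thesis using assms by blast
qed

lemma mult_mono_in_filtration:
  "p \<in> expset n \<times> expset n \<Longrightarrow> mult_mono n x p \<in> filtration (mult_exp n p)"
  unfolding mult_mono_def mult_exp_def
  by (rule smono_mult_smono_in_filtration) (auto simp: opx_in_expset)

section \<open>Leading exponents of images under multiplication\<close>

lemma coeffR_smono:
  assumes "\<gamma> \<in> expset n" "\<delta> \<in> expset n"
  shows "coeffR scale n x (smono n x \<gamma>) \<delta> = (if \<delta> = \<gamma> then 1 else 0)"
proof -
  have "(smono n x \<delta> = smono n x \<gamma>) = (\<delta> = \<gamma>)"
    using inj_on_smono assms by (auto dest: inj_onD)
  then show ?thesis
    using vs.representation_basis[OF independent_smono, of "smono n x \<gamma>"] assms(1)
    by (simp add: coeffR_def)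
qed

lemma coeffR_zero: "coeffR scale n x 0 \<delta> = 0"
  by (simp add: coeffR_def vs.representation_zero)

lemma coeffR_sum:
  "finite T \<Longrightarrow> coeffR scale n x (\<Sum>t\<in>T. scale (c t) (g t)) \<delta> = (\<Sum>t\<in>T. c t * coeffR scale n x (g t) \<delta>)"
  by (simp add: coeffR_def vs.representation_sum[OF independent_smono]
      vs.representation_scale[OF independent_smono] span_smono)

lemma coeffR_filtration:
  assumes r: "r \<in> filtration \<gamma>" and \<delta>: "\<delta> \<in> expset n" and nz: "coeffR scale n x r \<delta> \<noteq> 0"
  shows "\<delta> = \<gamma> \<or> prec \<delta> \<gamma>"
proof -
  let ?B = "smono n x ` {\<delta> \<in> expset n. \<delta> = \<gamma> \<or> prec \<delta> \<gamma>}"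
  have "vs.representation (smono n x ` expset n) r = vs.representation ?B r"
    by (rule vs.representation_extend[OF independent_smono]) (use r in \<open>auto simp: filtration_def\<close>)
  then have "vs.representation ?B r (smono n x \<delta>) \<noteq> 0"
    using nz unfolding coeffR_def by simp
  then have "smono n x \<delta> \<in> ?B" by (rule vs.representation_ne_zero)
  then obtain \<delta>' where "\<delta>' \<in> expset n" "\<delta>' = \<gamma> \<or> prec \<delta>' \<gamma>" "smono n x \<delta> = smono n x \<delta>'"
    by blast
  then show ?thesis using inj_on_smono \<delta> by (metis inj_onD)
qed

lemmas mod_ord_trans =
  strict_total_on_trans[OF strict_total_on_mod_ord[OF admissible_strict_total[OF admissible]]]

lemma exp_R_eqI:
  assumes "\<tau> \<in> expset n" "i \<in> {1..s}" "coeffR scale n x (v i) \<tau> \<noteq> 0"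
    and "\<And>\<delta> j. \<delta> \<in> expset n \<Longrightarrow> j \<in> {1..s} \<Longrightarrow> coeffR scale n x (v j) \<delta> \<noteq> 0 \<Longrightarrow> (\<delta>, j) \<noteq> (\<tau>, i)
      \<Longrightarrow> mod_ord t prec (\<delta>, j) (\<tau>, i)"
  shows "exp_R t scale n x prec s v = (\<tau>, i)"
  unfolding exp_R_def
  by (rule max_wrt_eqI[OF strict_total_on_mod_ord[OF admissible_strict_total[OF admissible]]])
    (use assms in auto)

lemma coeffR_mult_s:
  "env_vec n s h \<Longrightarrow> coeffR scale n x (mult_s scale n x h j) \<delta>
    = (\<Sum>p\<in>{p. h (p, j) \<noteq> 0}. h (p, j) * coeffR scale n x (mult_mono n x p) \<delta>)"
  unfolding mult_s_eq by (rule coeffR_sum[OF env_vec_finite_row])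

lemma coeffR_mult_s_nonzero:
  assumes h: "env_vec n s h" and \<delta>: "\<delta> \<in> expset n"
    and nz: "coeffR scale n x (mult_s scale n x h j) \<delta> \<noteq> 0"
  obtains p where "h (p, j) \<noteq> 0" "\<delta> = mult_exp n p \<or> prec \<delta> (mult_exp n p)"
proof -
  obtain p where "p \<in> {p. h (p, j) \<noteq> 0}" "h (p, j) * coeffR scale n x (mult_mono n x p) \<delta> \<noteq> 0"
    using nz unfolding coeffR_mult_s[OF h] by (rule sum.not_neutral_contains_not_neutral)
  then have "h (p, j) \<noteq> 0" "coeffR scale n x (mult_mono n x p) \<delta> \<noteq> 0" by auto
  then show thesis
    using that coeffR_filtration[OF mult_mono_in_filtration \<delta>] env_vec_support[OF h] by blast
qed

lemma coeffR_mult_s_lead: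
  assumes h: "env_vec n s h" and lead: "h (p0, i) \<noteq> 0" and pure: "fst p0 = 0 \<or> snd p0 = 0"
    and below: "\<And>p. h (p, i) \<noteq> 0 \<Longrightarrow> p \<noteq> p0 \<Longrightarrow> prec (mult_exp n p) (mult_exp n p0)"
  shows "coeffR scale n x (mult_s scale n x h i) (mult_exp n p0) = h (p0, i)"
proof -
  let ?\<tau> = "mult_exp n p0"
  have p0: "p0 \<in> expset n \<times> expset n" using env_vec_support[OF h lead] by blast
  then have \<tau>: "?\<tau> \<in> expset n" by (rule mult_exp_in_expset)
  have others: "coeffR scale n x (mult_mono n x p) ?\<tau> = 0" if "h (p, i) \<noteq> 0" "p \<noteq> p0" for p
  proof (rule ccontr)
    assume "coeffR scale n x (mult_mono n x p) ?\<tau> \<noteq> 0"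
    then have "?\<tau> = mult_exp n p \<or> prec ?\<tau> (mult_exp n p)"
      using coeffR_filtration[OF mult_mono_in_filtration \<tau>] env_vec_support[OF h that(1)] by blast
    moreover have "mult_exp n p \<in> expset n"
      using env_vec_support[OF h that(1)] by (blast intro: mult_exp_in_expset)
    ultimately have "prec ?\<tau> ?\<tau>"
      using below[OF that] prec_trans[OF \<tau> _ \<tau>] by auto
    then show False
      using strict_total_on_irrefl[OF admissible_strict_total[OF admissible] \<tau>] by blast
  qed
  have "coeffR scale n x (mult_s scale n x h i) ?\<tau>
      = h (p0, i) * coeffR scale n x (mult_mono n x p0) ?\<tau>
        + (\<Sum>p\<in>{p. h (p, i) \<noteq> 0} - {p0}. h (p, i) * coeffR scale n x (mult_mono n x p) ?\<tau>)"
    unfolding coeffR_mult_s[OF h] using lead by (simp add: sum.remove[OF env_vec_finite_row[OF h]])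
  also have "\<dots> = h (p0, i)"
    using others by (simp add: mult_mono_pure[OF pure] coeffR_smono[OF \<tau> \<tau>])
  finally show ?thesis .
qed

lemma coeffR_mult_s_bounded:
  assumes h: "env_vec n s h" and lead: "h (p0, i) \<noteq> 0"
    and below: "\<And>p j. h (p, j) \<noteq> 0 \<Longrightarrow> (p, j) \<noteq> (p0, i) \<Longrightarrow> mod_ord t prec (mult_exp n p, j) (mult_exp n p0, i)"
    and \<delta>: "\<delta> \<in> expset n" and nz: "coeffR scale n x (mult_s scale n x h j) \<delta> \<noteq> 0"
    and ne: "(\<delta>, j) \<noteq> (mult_exp n p0, i)"
  shows "mod_ord t prec (\<delta>, j) (mult_exp n p0, i)"
proof -
  obtain p where p: "h (p, j) \<noteq> 0" "\<delta> = mult_exp n p \<or> prec \<delta> (mult_exp n p)"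
    using coeffR_mult_s_nonzero[OF h \<delta> nz] .
  show ?thesis
  proof (cases "(p, j) = (p0, i)")
    case True
    then show ?thesis using p(2) ne by auto
  next
    case False
    have "mult_exp n p \<in> expset n" "mult_exp n p0 \<in> expset n"
      using env_vec_support[OF h p(1)] env_vec_support[OF h lead] by (auto intro: mult_exp_in_expset)
    then show ?thesis
      using p(2) below[OF p(1) False] \<delta>
        mod_ord_trans[where a = "(\<delta>, j)" and b = "(mult_exp n p, j)" and c = "(mult_exp n p0, i)"]
      by auto
  qed
qed

(* The hypotheses on p0 are what each of the four orders supplies: every other term of h is
   mapped below x^(mult_exp n p0), and the leading term is mapped to that single monomial. *)
lemma exp_R_mult_s:
  assumes ord: "strict_total_on (expset n \<times> expset n) ord"
    and h: "env_vec n s h" "h \<noteq> (\<lambda>_. 0)" and exp: "exp_env t ord h = (p0, i)"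
    and pure: "fst p0 = 0 \<or> snd p0 = 0"
    and compat: "\<And>p. p \<in> expset n \<times> expset n \<Longrightarrow> ord p p0 \<Longrightarrow> prec (mult_exp n p) (mult_exp n p0)"
  shows "mult_s scale n x h \<noteq> (\<lambda>_. 0) \<and>
    exp_R t scale n x prec s (mult_s scale n x h) = (mult_exp n p0, i)"
proof -
  let ?\<tau> = "mult_exp n p0" and ?v = "mult_s scale n x h"
  have lead: "h (p0, i) \<noteq> 0" using exp_env_greatest(1)[OF h ord, where t = t] exp by simp
  have p0: "p0 \<in> expset n \<times> expset n" "i \<in> {1..s}" using env_vec_support[OF h(1) lead] by auto
  have \<tau>: "?\<tau> \<in> expset n" by (rule mult_exp_in_expset[OF p0(1)])
  have below: "mod_ord t prec (mult_exp n p, j) (?\<tau>, i)"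
    if "h (p, j) \<noteq> 0" "(p, j) \<noteq> (p0, i)" for p j
  proof (rule mod_ord_map[where f = "mult_exp n"])
    show "mod_ord t ord (p, j) (p0, i)"
      using exp_env_greatest(2)[OF h ord, where t = t, OF that(1)] that(2) exp by simp
    show "ord p p0 \<Longrightarrow> prec (mult_exp n p) (mult_exp n p0)"
      using compat env_vec_support[OF h(1) that(1)] by blast
  qed
  have coeff_lead: "coeffR scale n x (?v i) ?\<tau> = h (p0, i)"
  proof (rule coeffR_mult_s_lead[OF h(1) lead pure])
    show "prec (mult_exp n p) ?\<tau>" if "h (p, i) \<noteq> 0" "p \<noteq> p0" for p
      using below[of p i] that by simp
  qed
  have coeff_below: "mod_ord t prec (\<delta>, j) (?\<tau>, i)"
    if "\<delta> \<in> expset n" "coeffR scale n x (?v j) \<delta> \<noteq> 0" "(\<delta>, j) \<noteq> (?\<tau>, i)" for \<delta> j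
    using coeffR_mult_s_bounded[OF h(1) lead below that] .
  have "?v \<noteq> (\<lambda>_. 0)"
    using coeff_lead lead coeffR_zero by auto
  moreover have "exp_R t scale n x prec s ?v = (?\<tau>, i)"
    by (rule exp_R_eqI[OF \<tau> p0(2)]) (use coeff_lead lead coeff_below in auto)
  ultimately show ?thesis ..
qed

end

theorem mainTheorem5:
  fixes scale :: "'k::field \<Rightarrow> 'r::ring_1 \<Rightarrow> 'r"
    and n s :: nat and x :: "nat \<Rightarrow> 'r"
    and prec :: "(nat \<Rightarrow> nat) \<Rightarrow> (nat \<Rightarrow> nat) \<Rightarrow> bool"
    and use_top :: bool
  assumes pbw: "pbw_algebra scale n x prec"
  shows
   "(\<forall>ord \<in> {ord_upper_star n prec, ord_upper_c n prec}.
      \<forall>(h :: exp2 \<times> nat \<Rightarrow> 'k) \<alpha> i.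
        env_vec n s h \<and> h \<noteq> (\<lambda>_. 0) \<and> exp_env use_top ord h = ((\<alpha>, 0), i) \<longrightarrow>
        mult_s scale n x h \<noteq> (\<lambda>_. 0) \<and>
        exp_R use_top scale n x prec s (mult_s scale n x h) = (\<alpha>, i)) \<and>
    (\<forall>ord \<in> {ord_lower_star n prec, ord_lower_c n prec}.
      \<forall>(h :: exp2 \<times> nat \<Rightarrow> 'k) \<alpha> i.
        env_vec n s h \<and> h \<noteq> (\<lambda>_. 0) \<and> exp_env use_top ord h = ((0, \<alpha>), i) \<longrightarrow>
        mult_s scale n x h \<noteq> (\<lambda>_. 0) \<and>
        exp_R use_top scale n x prec s (mult_s scale n x h) = (opx n \<alpha>, i))"
proof -
  interpret pbw scale n x prec by (rule pbw.intro[OF pbw])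
  have upper: "mult_s scale n x h \<noteq> (\<lambda>_. 0) \<and>
      exp_R use_top scale n x prec s (mult_s scale n x h) = (\<alpha>, i)"
    if "ord \<in> {ord_upper_star n prec, ord_upper_c n prec}" and h: "env_vec n s h" "h \<noteq> (\<lambda>_. 0)"
      and exp: "exp_env use_top ord h = ((\<alpha>, 0), i)"
    for ord and h :: "exp2 \<times> nat \<Rightarrow> 'k" and \<alpha> i
  proof -
    have "strict_total_on (expset n \<times> expset n) ord"
      and "\<And>p. p \<in> expset n \<times> expset n \<Longrightarrow> ord p (\<alpha>, 0) \<Longrightarrow> prec (mult_exp n p) (mult_exp n (\<alpha>, 0))"
      using that(1) strict_total_on_ord_upper_star[OF admissible]
        strict_total_on_ord_upper_c[OF admissible]
        ord_upper_star_mult_exp[OF admissible] ord_upper_c_mult_exp[OF admissible] by blast+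
    from exp_R_mult_s[OF this(1) h exp _ this(2)] show ?thesis by simp
  qed
  have lower: "mult_s scale n x h \<noteq> (\<lambda>_. 0) \<and>
      exp_R use_top scale n x prec s (mult_s scale n x h) = (opx n \<alpha>, i)"
    if "ord \<in> {ord_lower_star n prec, ord_lower_c n prec}" and h: "env_vec n s h" "h \<noteq> (\<lambda>_. 0)"
      and exp: "exp_env use_top ord h = ((0, \<alpha>), i)"
    for ord and h :: "exp2 \<times> nat \<Rightarrow> 'k" and \<alpha> i
  proof -
    have "strict_total_on (expset n \<times> expset n) ord"
      and "\<And>p. p \<in> expset n \<times> expset n \<Longrightarrow> ord p (0, \<alpha>) \<Longrightarrow> prec (mult_exp n p) (mult_exp n (0, \<alpha>))"
      using that(1) strict_total_on_ord_lower_star[OF admissible]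
        strict_total_on_ord_lower_c[OF admissible]
        ord_lower_star_mult_exp[OF admissible] ord_lower_c_mult_exp[OF admissible] by blast+
    from exp_R_mult_s[OF this(1) h exp _ this(2)] show ?thesis by simp
  qed
  show ?thesis using upper lower by blast
qed

end
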